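(* Let $S$ be a finite $0$-rectangular band with $m$ rows and $n=am$ columns in its non-zero $\mathscr{D}$-class, where $a\ge 1$ is an integer. If $S$ has a permutation matching, then $S$ has an involution matching.
   Context: A finite $0$-rectangular band with $m$ rows and $n$ columns: $S=(R\times C)\cup\{0\}$ with $R=\{1,\dots,m\}$, $C=\{1,\dots,n\}$, and a set $E\subseteq R\times C$ meeting every row and every column; multiplication is $(i,j)(k,l)=(i,l)$ if $(k,j)\in E$ and $0$ otherwise, with $0$ a zero element. Its non-zero $\mathscr{D}$-class is $R\times C$. For $x\in S$, $V(x)=\{y\in S: xyx=x,\ yxy=y\}$. A permutation matching of $S$ is a bijection $\phi:S\to S$ with $\phi(x)\in V(x)$ for all $x\in S$; an involution matching is a permutation matching $\phi$ with $\phi\circ\phi=\mathrm{id}_S$. *)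

theory Defs
  imports Main
begin

text \<open>Finite 0-rectangular band S = (R x C) u {0} with R = {1..m}, C = {1..n}.
  The zero is represented by None, the pair (i,j) by Some (i,j).\<close>

definition zrb_carrier :: "nat \<Rightarrow> nat \<Rightarrow> (nat \<times> nat) option set" where
  "zrb_carrier m n = insert None (Some ` ({1..m} \<times> {1..n}))"

definition zrb_mult :: "(nat \<times> nat) set \<Rightarrow> (nat \<times> nat) option \<Rightarrow> (nat \<times> nat) option \<Rightarrow> (nat \<times> nat) option" where
  "zrb_mult E x y = (case x of None \<Rightarrow> None | Some (i, j) \<Rightarrow>
      (case y of None \<Rightarrow> None | Some (k, l) \<Rightarrow> (if (k, j) \<in> E then Some (i, l) else None)))"

definition zrb_sandwich_ok :: "nat \<Rightarrow> nat \<Rightarrow> (nat \<times> nat) set \<Rightarrow> bool" where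
  "zrb_sandwich_ok m n E \<longleftrightarrow> E \<subseteq> {1..m} \<times> {1..n}
     \<and> (\<forall>i\<in>{1..m}. \<exists>j. (i, j) \<in> E) \<and> (\<forall>j\<in>{1..n}. \<exists>i. (i, j) \<in> E)"

definition zrb_V :: "nat \<Rightarrow> nat \<Rightarrow> (nat \<times> nat) set \<Rightarrow> (nat \<times> nat) option \<Rightarrow> (nat \<times> nat) option set" where
  "zrb_V m n E x = {y \<in> zrb_carrier m n.
      zrb_mult E (zrb_mult E x y) x = x \<and> zrb_mult E (zrb_mult E y x) y = y}"

definition permutation_matching ::
  "nat \<Rightarrow> nat \<Rightarrow> (nat \<times> nat) set \<Rightarrow> ((nat \<times> nat) option \<Rightarrow> (nat \<times> nat) option) \<Rightarrow> bool" where
  "permutation_matching m n E \<phi> \<longleftrightarrow>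
     bij_betw \<phi> (zrb_carrier m n) (zrb_carrier m n) \<and> (\<forall>x\<in>zrb_carrier m n. \<phi> x \<in> zrb_V m n E x)"

definition involution_matching ::
  "nat \<Rightarrow> nat \<Rightarrow> (nat \<times> nat) set \<Rightarrow> ((nat \<times> nat) option \<Rightarrow> (nat \<times> nat) option) \<Rightarrow> bool" where
  "involution_matching m n E \<phi> \<longleftrightarrow>
     permutation_matching m n E \<phi> \<and> (\<forall>x\<in>zrb_carrier m n. \<phi> (\<phi> x) = x)"

end

theory Submission imports Defs begin

text \<open>A permutation matching \<phi> maps X \<times> C injectively into R \<times> N(X), where N(X) is the set of
  columns meeting some row of X in E; hence |N(X)| \<ge> a|X|. By Hall's theorem, applied to a
  copies of every row, there is a bijection f : R \<times> {1..a} \<rightarrow> C with (i, f(i,s)) \<in> E.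
  Writing every column as f(k,s), the map (i, f(k,s)) \<mapsto> (k, f(i,s)) sends each element to one
  of its inverses and is its own inverse.\<close>

definition hall_condition :: "'a set \<Rightarrow> ('a \<Rightarrow> 'b set) \<Rightarrow> bool" where
  "hall_condition I A \<longleftrightarrow> (\<forall>J\<subseteq>I. card J \<le> card (\<Union>(A ` J)))"

lemma hall_conditionD: "hall_condition I A \<Longrightarrow> J \<subseteq> I \<Longrightarrow> card J \<le> card (\<Union>(A ` J))"
  unfolding hall_condition_def by blast

lemma hall_condition_member:
  assumes "hall_condition I A" and "i \<in> I"
  shows "finite (A i)" and "A i \<noteq> {}"
proof -
  have "card {i} \<le> card (\<Union>(A ` {i}))"
    using assms by (intro hall_conditionD) auto
  then have "card (A i) > 0" by simp
  then show "finite (A i)" and "A i \<noteq> {}" by (auto simp: card_gt_0_iff)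
qed

lemma hall_condition_violated_after_removal:
  assumes "hall_condition I A" and "\<not> hall_condition I (A(i := A i - {x}))" and "finite I"
  obtains K where "K \<subseteq> I - {i}" and "card ((A i - {x}) \<union> \<Union>(A ` K)) \<le> card K"
proof -
  obtain J where J: "J \<subseteq> I" and lt: "card J > card (\<Union>((A(i := A i - {x})) ` J))"
    using assms(2) unfolding hall_condition_def by (auto simp: not_le)
  have "i \<in> J"
  proof (rule ccontr)
    assume "i \<notin> J"
    then have "(A(i := A i - {x})) ` J = A ` J" by auto
    then show False using lt hall_conditionD[OF assms(1) J] by simp
  qed
  define K where "K = J - {i}"
  have "card J = Suc (card K)"
    unfolding K_def by (rule card_Suc_Diff1[OF finite_subset[OF J assms(3)] \<open>i \<in> J\<close>, symmetric])
  moreover have "\<Union>((A(i := A i - {x})) ` J) = (A i - {x}) \<union> \<Union>(A ` K)"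
    using \<open>i \<in> J\<close> unfolding K_def by auto
  ultimately have "card ((A i - {x}) \<union> \<Union>(A ` K)) \<le> card K"
    using lt by simp
  moreover have "K \<subseteq> I - {i}" using J unfolding K_def by auto
  ultimately show thesis using that by blast
qed

text \<open>Rado's step: if both removals violated Hall's condition, witnessed by K1 and K2,
  then Hall's condition for K1 \<union> K2 \<union> {i} and for K1 \<inter> K2 would contradict
  the submodularity of cardinality.\<close>

lemma hall_condition_remove_one:
  assumes hall: "hall_condition I A" and "finite I" and i: "i \<in> I"
    and x: "x\<^sub>1 \<in> A i" "x\<^sub>2 \<in> A i" "x\<^sub>1 \<noteq> x\<^sub>2"
  shows "\<exists>x\<in>{x\<^sub>1, x\<^sub>2}. hall_condition I (A(i := A i - {x}))"
proof (rule ccontr)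
  assume "\<not> ?thesis"
  then have "\<not> hall_condition I (A(i := A i - {x\<^sub>1}))" "\<not> hall_condition I (A(i := A i - {x\<^sub>2}))"
    by auto
  obtain K\<^sub>1 where K\<^sub>1: "K\<^sub>1 \<subseteq> I - {i}"
    and P\<^sub>1: "card ((A i - {x\<^sub>1}) \<union> \<Union>(A ` K\<^sub>1)) \<le> card K\<^sub>1"
    by (rule hall_condition_violated_after_removal[OF hall \<open>\<not> hall_condition I (A(i := A i - {x\<^sub>1}))\<close> \<open>finite I\<close>])
  obtain K\<^sub>2 where K\<^sub>2: "K\<^sub>2 \<subseteq> I - {i}"
    and P\<^sub>2: "card ((A i - {x\<^sub>2}) \<union> \<Union>(A ` K\<^sub>2)) \<le> card K\<^sub>2"
    by (rule hall_condition_violated_after_removal[OF hall \<open>\<not> hall_condition I (A(i := A i - {x\<^sub>2}))\<close> \<open>finite I\<close>])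
  note K = K\<^sub>1 K\<^sub>2
  define P\<^sub>1 where "P\<^sub>1 = (A i - {x\<^sub>1}) \<union> \<Union>(A ` K\<^sub>1)"
  define P\<^sub>2 where "P\<^sub>2 = (A i - {x\<^sub>2}) \<union> \<Union>(A ` K\<^sub>2)"
  have fin_K: "finite K\<^sub>1" "finite K\<^sub>2"
    using finite_subset[OF K(1)] finite_subset[OF K(2)] \<open>finite I\<close> by auto
  have fin_P: "finite P\<^sub>1" "finite P\<^sub>2"
    using K fin_K hall_condition_member(1)[OF hall] i unfolding P\<^sub>1_def P\<^sub>2_def by auto
  have "insert i (K\<^sub>1 \<union> K\<^sub>2) \<subseteq> I" using K i by auto
  then have "card (insert i (K\<^sub>1 \<union> K\<^sub>2)) \<le> card (\<Union>(A ` insert i (K\<^sub>1 \<union> K\<^sub>2)))"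
    by (rule hall_conditionD[OF hall])
  also have "\<Union>(A ` insert i (K\<^sub>1 \<union> K\<^sub>2)) = P\<^sub>1 \<union> P\<^sub>2"
    using x unfolding P\<^sub>1_def P\<^sub>2_def by auto
  also have "card (insert i (K\<^sub>1 \<union> K\<^sub>2)) = card (K\<^sub>1 \<union> K\<^sub>2) + 1"
    using K fin_K by (subst card_insert_disjoint) auto
  finally have union: "card (K\<^sub>1 \<union> K\<^sub>2) + 1 \<le> card (P\<^sub>1 \<union> P\<^sub>2)" .
  have "card (K\<^sub>1 \<inter> K\<^sub>2) \<le> card (\<Union>(A ` (K\<^sub>1 \<inter> K\<^sub>2)))"
    using K by (intro hall_conditionD[OF hall]) auto
  also have "\<dots> \<le> card (P\<^sub>1 \<inter> P\<^sub>2)"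
    using fin_P unfolding P\<^sub>1_def P\<^sub>2_def by (intro card_mono) auto
  finally have inter: "card (K\<^sub>1 \<inter> K\<^sub>2) \<le> card (P\<^sub>1 \<inter> P\<^sub>2)" .
  show False
    using union inter P\<^sub>1 P\<^sub>2 card_Un_Int[OF fin_P] card_Un_Int[OF fin_K]
    unfolding P\<^sub>1_def P\<^sub>2_def by linarith
qed

lemma hall_condition_singletons:
  assumes hall: "hall_condition I A" and single: "\<forall>i\<in>I. \<forall>x\<in>A i. \<forall>y\<in>A i. x = y"
  shows "\<exists>f. inj_on f I \<and> (\<forall>i\<in>I. f i \<in> A i)"
proof -
  define f where "f i = (SOME x. x \<in> A i)" for i
  have f: "f i \<in> A i" if "i \<in> I" for i
    using hall_condition_member(2)[OF hall that] unfolding f_def by (simp add: some_in_eq)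
  have A: "A i = {f i}" if "i \<in> I" for i
    using f[OF that] bspec[OF single that] by auto
  have "inj_on f I"
  proof (rule inj_onI, rule ccontr)
    fix p q assume pq: "p \<in> I" "q \<in> I" "f p = f q" "p \<noteq> q"
    then have "card {p, q} \<le> card (\<Union>(A ` {p, q}))"
      by (intro hall_conditionD[OF hall]) auto
    also have "\<Union>(A ` {p, q}) = {f p}"
      using A[OF pq(1)] A[OF pq(2)] pq(3) by simp
    finally show False using \<open>p \<noteq> q\<close> by simp
  qed
  then show ?thesis using f by blast
qed

theorem hall_marriage:
  assumes "finite I" and "hall_condition I A"
  shows "\<exists>f. inj_on f I \<and> (\<forall>i\<in>I. f i \<in> A i)"
  using assms
proof (induction "\<Sum>i\<in>I. card (A i)" arbitrary: A rule: less_induct)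
  case less
  show ?case
  proof (cases "\<exists>i\<in>I. \<exists>x\<^sub>1\<in>A i. \<exists>x\<^sub>2\<in>A i. x\<^sub>1 \<noteq> x\<^sub>2")
    case True
    then obtain i x\<^sub>1 x\<^sub>2 where i: "i \<in> I" and x: "x\<^sub>1 \<in> A i" "x\<^sub>2 \<in> A i" "x\<^sub>1 \<noteq> x\<^sub>2" by blast
    then obtain x where "x \<in> A i" and hall': "hall_condition I (A(i := A i - {x}))"
      using hall_condition_remove_one[OF less.prems(2,1) i x] by blast
    have smaller: "(\<Sum>k\<in>I. card ((A(i := A i - {x})) k)) < (\<Sum>k\<in>I. card (A k))"
    proof (rule sum_strict_mono_ex1[OF less.prems(1)])
      show "\<forall>k\<in>I. card ((A(i := A i - {x})) k) \<le> card (A k)"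
        using hall_condition_member(1)[OF less.prems(2)] by (auto intro: card_mono)
      have "card (A i - {x}) < card (A i)"
        by (rule card_Diff1_less[OF hall_condition_member(1)[OF less.prems(2) i] \<open>x \<in> A i\<close>])
      then show "\<exists>k\<in>I. card ((A(i := A i - {x})) k) < card (A k)"
        using i by auto
    qed
    obtain f where "inj_on f I" "\<forall>k\<in>I. f k \<in> (A(i := A i - {x})) k"
      using less.hyps[OF smaller less.prems(1) hall'] by blast
    moreover have "\<forall>k\<in>I. (A(i := A i - {x})) k \<subseteq> A k" by auto
    ultimately show ?thesis by blast
  next
    case False
    then show ?thesis using hall_condition_singletons[OF less.prems(2)] by blast
  qed
qed

lemma Some_in_zrb_V_Some_iff:
  "Some (k, l) \<in> zrb_V m n E (Some (i, j)) \<longleftrightarrow>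
     k \<in> {1..m} \<and> l \<in> {1..n} \<and> (k, j) \<in> E \<and> (i, l) \<in> E"
  unfolding zrb_V_def zrb_carrier_def zrb_mult_def by auto

lemma zrb_V_None: "zrb_V m n E None = {None}"
proof -
  have "y = None" if "y \<in> zrb_V m n E None" for y
    using that unfolding zrb_V_def zrb_mult_def by (cases y) auto
  then show ?thesis unfolding zrb_V_def zrb_mult_def zrb_carrier_def by auto
qed

lemma zrb_V_SomeE:
  assumes "y \<in> zrb_V m n E (Some (i, j))"
  obtains k l where "y = Some (k, l)" and "k \<in> {1..m}" "l \<in> {1..n}" "(k, j) \<in> E" "(i, l) \<in> E"
proof -
  have "y \<noteq> None"
  proof
    assume "y = None"
    then show False using assms unfolding zrb_V_def zrb_mult_def by simp
  qed
  then obtain k l where "y = Some (k, l)" by (cases y) auto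
  then show thesis using that assms Some_in_zrb_V_Some_iff by blast
qed

lemma involution_matchingI:
  assumes "\<forall>x\<in>zrb_carrier m n. \<psi> x \<in> zrb_V m n E x"
    and "\<forall>x\<in>zrb_carrier m n. \<psi> (\<psi> x) = x"
  shows "involution_matching m n E \<psi>"
proof -
  have "\<psi> x \<in> zrb_carrier m n" if "x \<in> zrb_carrier m n" for x
    using assms(1) that unfolding zrb_V_def by blast
  then have "bij_betw \<psi> (zrb_carrier m n) (zrb_carrier m n)"
    using assms(2) by (intro bij_betw_byWitness[where f' = \<psi>]) auto
  then show ?thesis using assms unfolding involution_matching_def permutation_matching_def by blast
qed

lemma permutation_matching_row_expansion:
  assumes \<phi>: "permutation_matching m n E \<phi>" and X: "X \<subseteq> {1..m}"
  shows "card X * n \<le> m * card {j \<in> {1..n}. \<exists>i\<in>X. (i, j) \<in> E}"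
proof -
  define N where "N = {j \<in> {1..n}. \<exists>i\<in>X. (i, j) \<in> E}"
  have "Some ` (X \<times> {1..n}) \<subseteq> zrb_carrier m n"
    using X unfolding zrb_carrier_def by auto
  then have inj: "inj_on \<phi> (Some ` (X \<times> {1..n}))"
    using \<phi> unfolding permutation_matching_def bij_betw_def by (meson inj_on_subset)
  have "\<phi> ` Some ` (X \<times> {1..n}) \<subseteq> Some ` ({1..m} \<times> N)"
  proof clarify
    fix i j assume ij: "i \<in> X" "j \<in> {1..n}"
    then have "\<phi> (Some (i, j)) \<in> zrb_V m n E (Some (i, j))"
      using \<phi> X unfolding permutation_matching_def zrb_carrier_def by blast
    then show "\<phi> (Some (i, j)) \<in> Some ` ({1..m} \<times> N)"
      by (rule zrb_V_SomeE) (use ij in \<open>auto simp: N_def\<close>)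
  qed
  then have "card (\<phi> ` Some ` (X \<times> {1..n})) \<le> card (Some ` ({1..m} \<times> N))"
    by (intro card_mono) (auto simp: N_def)
  then have "card (X \<times> {1..n}) \<le> card ({1..m} \<times> N)"
    using inj by (simp add: card_image)
  then show ?thesis by (simp add: card_cartesian_product N_def)
qed

lemma zrb_hall_condition:
  fixes m n a :: nat
  assumes "permutation_matching m n E \<phi>" and "m \<ge> 1" and "n = a * m"
  shows "hall_condition ({1..m} \<times> {1..a}) (\<lambda>p. {j \<in> {1..n}. (fst p, j) \<in> E})"
  unfolding hall_condition_def
proof (intro allI impI)
  fix J assume J: "J \<subseteq> {1..m} \<times> {1..a}"
  define X where "X = fst ` J"
  have X: "X \<subseteq> {1..m}" using J unfolding X_def by auto
  have "J \<subseteq> X \<times> {1..a}" using J unfolding X_def by force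
  then have "card J \<le> card X * a"
    using finite_subset[OF X] card_mono[of "X \<times> {1..a}" J] by (simp add: card_cartesian_product)
  also have "m * (card X * a) \<le> m * card {j \<in> {1..n}. \<exists>i\<in>X. (i, j) \<in> E}"
    using permutation_matching_row_expansion[OF assms(1) X] assms(3) by (simp add: algebra_simps)
  then have "card X * a \<le> card {j \<in> {1..n}. \<exists>i\<in>X. (i, j) \<in> E}"
    using assms(2) by simp
  also have "{j \<in> {1..n}. \<exists>i\<in>X. (i, j) \<in> E} = \<Union>((\<lambda>p. {j \<in> {1..n}. (fst p, j) \<in> E}) ` J)"
    unfolding X_def by auto
  finally show "card J \<le> card (\<Union>((\<lambda>p. {j \<in> {1..n}. (fst p, j) \<in> E}) ` J))" .
qed

lemma zrb_block_bijection:
  fixes m n a :: nat and E :: "(nat \<times> nat) set"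
  assumes "hall_condition ({1..m} \<times> {1..a}) (\<lambda>p. {j \<in> {1..n}. (fst p, j) \<in> E})"
    and "n = a * m"
  obtains f where "bij_betw f ({1..m} \<times> {1..a}) {1..n}"
    and "\<forall>p\<in>{1..m} \<times> {1..a}. (fst p, f p) \<in> E"
proof -
  have "finite ({1..m} \<times> {1..a})" by simp
  then obtain f where inj: "inj_on f ({1..m} \<times> {1..a})"
    and f: "\<forall>p\<in>{1..m} \<times> {1..a}. f p \<in> {j \<in> {1..n}. (fst p, j) \<in> E}"
    using hall_marriage assms(1) by blast
  have "f ` ({1..m} \<times> {1..a}) = {1..n}"
  proof (rule card_subset_eq)
    show "f ` ({1..m} \<times> {1..a}) \<subseteq> {1..n}" using f by auto
    show "card (f ` ({1..m} \<times> {1..a})) = card {1..n}"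
      using card_image[OF inj] assms(2) by (simp add: card_cartesian_product)
  qed simp
  then show thesis using that inj f unfolding bij_betw_def by auto
qed

definition block_swap :: "nat \<Rightarrow> nat \<Rightarrow> (nat \<times> nat \<Rightarrow> nat) \<Rightarrow> (nat \<times> nat) option \<Rightarrow> (nat \<times> nat) option"
  where "block_swap m a f x = (case x of None \<Rightarrow> None
      | Some (i, j) \<Rightarrow> (case inv_into ({1..m} \<times> {1..a}) f j of (k, s) \<Rightarrow> Some (k, f (i, s))))"

lemma block_swap_involution_matching:
  assumes bij: "bij_betw f ({1..m} \<times> {1..a}) {1..n}"
    and E: "\<forall>p\<in>{1..m} \<times> {1..a}. (fst p, f p) \<in> E"
  shows "involution_matching m n E (block_swap m a f)"
proof (rule involution_matchingI; intro ballI)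
  fix x assume x: "x \<in> zrb_carrier m n"
  let ?\<psi> = "block_swap m a f"
  have "?\<psi> x \<in> zrb_V m n E x \<and> ?\<psi> (?\<psi> x) = x"
  proof (cases x)
    case None
    then show ?thesis by (simp add: block_swap_def zrb_V_None)
  next
    case (Some p)
    then obtain i j where x_eq: "x = Some (i, j)" and i: "i \<in> {1..m}" and j: "j \<in> {1..n}"
      using x unfolding zrb_carrier_def by auto
    obtain k s where ks: "inv_into ({1..m} \<times> {1..a}) f j = (k, s)" by fastforce
    have ks_mem: "(k, s) \<in> {1..m} \<times> {1..a}" and f_ks: "f (k, s) = j"
      using ks j bij by (metis bij_betw_def inv_into_into, metis bij_betw_def f_inv_into_f)
    have is_mem: "(i, s) \<in> {1..m} \<times> {1..a}" using ks_mem i by auto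
    have inv_is: "inv_into ({1..m} \<times> {1..a}) f (f (i, s)) = (i, s)"
      using bij is_mem by (simp add: bij_betw_def inv_into_f_f)
    have "?\<psi> x = Some (k, f (i, s))"
      unfolding block_swap_def x_eq by (simp only: option.case prod.case ks)
    moreover have "?\<psi> (Some (k, f (i, s))) = x"
      unfolding block_swap_def x_eq by (simp only: option.case prod.case inv_is f_ks)
    moreover have "(k, j) \<in> E" and "(i, f (i, s)) \<in> E"
      using E ks_mem is_mem f_ks by auto
    moreover have "f (i, s) \<in> {1..n}" using bij_betw_apply[OF bij is_mem] .
    ultimately show ?thesis
      using ks_mem by (simp add: x_eq Some_in_zrb_V_Some_iff)
  qed
  then show "?\<psi> x \<in> zrb_V m n E x" and "?\<psi> (?\<psi> x) = x" by auto
qed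

theorem proposition2p3:
  fixes m n a :: nat and E :: "(nat \<times> nat) set"
  assumes "m \<ge> 1" and "a \<ge> 1" and "n = a * m"
    and "zrb_sandwich_ok m n E"
    and "\<exists>\<phi>. permutation_matching m n E \<phi>"
  shows "\<exists>\<psi>. involution_matching m n E \<psi>"
proof -
  obtain \<phi> where "permutation_matching m n E \<phi>" using assms(5) by blast
  then have "hall_condition ({1..m} \<times> {1..a}) (\<lambda>p. {j \<in> {1..n}. (fst p, j) \<in> E})"
    using zrb_hall_condition assms(1,3) by blast
  then obtain f where "bij_betw f ({1..m} \<times> {1..a}) {1..n}"
    and "\<forall>p\<in>{1..m} \<times> {1..a}. (fst p, f p) \<in> E"
    using zrb_block_bijection assms(3) by blast
  then show ?thesis using block_swap_involution_matching by blast
qed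

end
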